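(* Let $d_1,d_2,d_3,d_4\in\mathbb{C}^*$ satisfy $\sum_{k=1}^4 1/d_k=0$. There exists a quadratic Hamiltonian vector field on $\mathbb{C}^2$ with four distinct non-degenerate singular points $p_1,\dots,p_4$ such that the multiset $\{\det Dv(p_k)\}_{k=1}^4$ equals $\{d_1,\dots,d_4\}$ if and only if one of the following holds: (1) $d_j+d_k\ne0$ for all $j\ne k$; or (2) $\{d_1,\dots,d_4\}=\{d,-d,d,-d\}$ as multisets, for some $d\in\mathbb{C}^*$.
   Context: A quadratic Hamiltonian vector field is $v=P\,\partial_x+Q\,\partial_y$ with $\deg P,\deg Q\le 2$ and $P_x+Q_y\equiv0$. $Dv$ is the Jacobian matrix of $(P,Q)$. A singular point $p$ is non-degenerate if $\det Dv(p)\ne0$. For such $v$, $\operatorname{tr}Dv\equiv0$, so the spectrum at each singular point is determined by $\det Dv(p)$. *)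

theory Defs
  imports Complex_Main "HOL-Library.Multiset"
begin

text \<open>A polynomial in two complex variables x, y of degree at most 2 is represented by its
  coefficient function c, where c i j is the coefficient of x^i y^j, and c i j = 0 whenever
  i + j > 2.\<close>

type_synonym coeffs2 = "nat \<Rightarrow> nat \<Rightarrow> complex"

definition deg_le2 :: "coeffs2 \<Rightarrow> bool" where
  "deg_le2 c \<longleftrightarrow> (\<forall>i j. 2 < i + j \<longrightarrow> c i j = 0)"

definition peval :: "coeffs2 \<Rightarrow> complex \<times> complex \<Rightarrow> complex" where
  "peval c p = (\<Sum>i\<le>2. \<Sum>j\<le>2. c i j * fst p ^ i * snd p ^ j)"

definition pdx :: "coeffs2 \<Rightarrow> coeffs2" where
  "pdx c i j = of_nat (Suc i) * c (Suc i) j"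

definition pdy :: "coeffs2 \<Rightarrow> coeffs2" where
  "pdy c i j = of_nat (Suc j) * c i (Suc j)"

definition quad_hamiltonian :: "coeffs2 \<Rightarrow> coeffs2 \<Rightarrow> bool" where
  "quad_hamiltonian P Q \<longleftrightarrow> deg_le2 P \<and> deg_le2 Q \<and> (\<forall>i j. pdx P i j + pdy Q i j = 0)"

definition singular_pt :: "coeffs2 \<Rightarrow> coeffs2 \<Rightarrow> complex \<times> complex \<Rightarrow> bool" where
  "singular_pt P Q p \<longleftrightarrow> peval P p = 0 \<and> peval Q p = 0"

definition det_Dv :: "coeffs2 \<Rightarrow> coeffs2 \<Rightarrow> complex \<times> complex \<Rightarrow> complex" where
  "det_Dv P Q p = peval (pdx P) p * peval (pdy Q) p - peval (pdy P) p * peval (pdx Q) p"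

end

theory Submission
  imports Defs
begin

text \<open>If two prescribed determinants are opposite, \<open>\<Sum> 1/d\<^sub>k = 0\<close> forces the other two to be
  opposite as well, so the multiset is \<open>{x, -x, y, -y}\<close>. The key fact is that for a quadratic
  Hamiltonian field with three distinct singular points \<open>p\<^sub>1, p\<^sub>2, p\<^sub>3\<close>, non-degenerate at
  \<open>p\<^sub>1\<close>, \<open>det Dv(p\<^sub>1) + det Dv(p\<^sub>2) = 0\<close> implies \<open>det Dv(p\<^sub>3)\<^sup>2 = det Dv(p\<^sub>1)\<^sup>2\<close>:
  the points are not collinear, Taylor expansion expresses each Jacobian on the basis
  \<open>p\<^sub>2 - p\<^sub>1, p\<^sub>3 - p\<^sub>1\<close> through the quadratic part of \<open>v\<close>, and the vanishing traces make
  \<open>det Dv(p\<^sub>3)\<^sup>2 - det Dv(p\<^sub>1)\<^sup>2\<close> a multiple of \<open>det Dv(p\<^sub>1) + det Dv(p\<^sub>2)\<close>. Hence \<open>y = \<plusminus>x\<close>.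

  Conversely, a field vanishing at the vertices of the unit square realises \<open>{d, -d, d, -d}\<close>,
  and in the generic case the singular points \<open>(0,0), (1,0), (0,1)\<close> together with a suitable
  fourth point \<open>(a, b)\<close> realise any admissible \<open>d\<^sub>k\<close>.\<close>

section \<open>Quadratic polynomials in coordinates\<close>

lemma sum_atMost_2: "(\<Sum>i\<le>(2::nat). f i) = f 0 + f 1 + (f 2 :: 'a::comm_monoid_add)"
  by (simp add: numeral_2_eq_2 atMost_Suc ac_simps)

definition poly2 :: "coeffs2 \<Rightarrow> complex \<Rightarrow> complex \<Rightarrow> complex" where
  "poly2 c x y = c 0 0 + c 1 0 * x + c 0 1 * y + c 2 0 * x^2 + c 1 1 * x * y + c 0 2 * y^2"

definition poly2_dx :: "coeffs2 \<Rightarrow> complex \<Rightarrow> complex \<Rightarrow> complex" where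
  "poly2_dx c x y = c 1 0 + 2 * c 2 0 * x + c 1 1 * y"

definition poly2_dy :: "coeffs2 \<Rightarrow> complex \<Rightarrow> complex \<Rightarrow> complex" where
  "poly2_dy c x y = c 0 1 + c 1 1 * x + 2 * c 0 2 * y"

definition jac2 :: "coeffs2 \<Rightarrow> coeffs2 \<Rightarrow> complex \<Rightarrow> complex \<Rightarrow> complex" where
  "jac2 P Q x y = poly2_dx P x y * poly2_dy Q x y - poly2_dy P x y * poly2_dx Q x y"

lemma peval_eq_poly2:
  assumes "deg_le2 c"
  shows "peval c (x, y) = poly2 c x y"
proof -
  have "c 1 2 = 0" "c 2 1 = 0" "c 2 2 = 0" using assms by (auto simp: deg_le2_def)
  then show ?thesis
    unfolding peval_def poly2_def by (simp add: sum_atMost_2 algebra_simps power2_eq_square)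
qed

lemma peval_pdx_eq_poly2_dx:
  assumes "deg_le2 c"
  shows "peval (pdx c) (x, y) = poly2_dx c x y"
proof -
  have "c 1 2 = 0" "c 2 1 = 0" "c 2 2 = 0" "c 3 0 = 0" "c 3 1 = 0" "c 3 2 = 0"
    using assms by (auto simp: deg_le2_def)
  then show ?thesis
    unfolding peval_def pdx_def poly2_dx_def
    by (simp add: sum_atMost_2 algebra_simps numeral_2_eq_2 numeral_3_eq_3)
qed

lemma peval_pdy_eq_poly2_dy:
  assumes "deg_le2 c"
  shows "peval (pdy c) (x, y) = poly2_dy c x y"
proof -
  have "c 1 2 = 0" "c 2 1 = 0" "c 2 2 = 0" "c 0 3 = 0" "c 1 3 = 0" "c 2 3 = 0"
    using assms by (auto simp: deg_le2_def)
  then show ?thesis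
    unfolding peval_def pdy_def poly2_dy_def
    by (simp add: sum_atMost_2 algebra_simps numeral_2_eq_2 numeral_3_eq_3)
qed

lemma det_Dv_eq_jac2:
  "deg_le2 P \<Longrightarrow> deg_le2 Q \<Longrightarrow> det_Dv P Q (x, y) = jac2 P Q x y"
  by (simp add: det_Dv_def jac2_def peval_pdx_eq_poly2_dx peval_pdy_eq_poly2_dy)

lemma singular_pt_iff_poly2:
  "deg_le2 P \<Longrightarrow> deg_le2 Q \<Longrightarrow> singular_pt P Q (x, y) \<longleftrightarrow> poly2 P x y = 0 \<and> poly2 Q x y = 0"
  by (simp add: singular_pt_def peval_eq_poly2)

lemma quad_hamiltonian_trace_zero:
  assumes "quad_hamiltonian P Q"
  shows "poly2_dx P x y + poly2_dy Q x y = 0"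
proof -
  have div: "\<And>i j. pdx P i j + pdy Q i j = 0" using assms unfolding quad_hamiltonian_def by blast
  have "P 1 0 + Q 0 1 = 0" "2 * P 2 0 + Q 1 1 = 0" "P 1 1 + 2 * Q 0 2 = 0"
    using div[of 0 0] div[of 1 0] div[of 0 1]
    by (simp_all add: pdx_def pdy_def numeral_2_eq_2 algebra_simps)
  moreover have "poly2_dx P x y + poly2_dy Q x y
      = (P 1 0 + Q 0 1) + (2 * P 2 0 + Q 1 1) * x + (P 1 1 + 2 * Q 0 2) * y"
    unfolding poly2_dx_def poly2_dy_def by algebra
  ultimately show ?thesis by simp
qed

section \<open>Three singular points\<close>

definition quad_part2 :: "coeffs2 \<Rightarrow> complex \<Rightarrow> complex \<Rightarrow> complex" where
  "quad_part2 c r1 r2 = c 2 0 * r1^2 + c 1 1 * r1 * r2 + c 0 2 * r2^2"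

definition polar2 :: "coeffs2 \<Rightarrow> complex \<Rightarrow> complex \<Rightarrow> complex \<Rightarrow> complex \<Rightarrow> complex" where
  "polar2 c r1 r2 s1 s2 = 2 * c 2 0 * r1 * s1 + c 1 1 * (r1 * s2 + r2 * s1) + 2 * c 0 2 * r2 * s2"

lemma poly2_translate:
  "poly2 c (x + r1) (y + r2)
   = poly2 c x y + (poly2_dx c x y * r1 + poly2_dy c x y * r2) + quad_part2 c r1 r2"
  unfolding poly2_def poly2_dx_def poly2_dy_def quad_part2_def by algebra

lemma poly2_grad_translate:
  "poly2_dx c (x + z1) (y + z2) * r1 + poly2_dy c (x + z1) (y + z2) * r2
   = poly2_dx c x y * r1 + poly2_dy c x y * r2 + polar2 c z1 z2 r1 r2"
  unfolding poly2_dx_def poly2_dy_def polar2_def by algebra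

lemma polar2_self: "polar2 c r1 r2 r1 r2 = 2 * quad_part2 c r1 r2"
  unfolding polar2_def quad_part2_def by algebra

lemma polar2_commute: "polar2 c r1 r2 s1 s2 = polar2 c s1 s2 r1 r2"
  unfolding polar2_def by algebra

text \<open>On the line the polynomial is a quadratic in one variable with three roots, hence zero.\<close>
lemma poly2_grad_orth_of_collinear_zeros:
  assumes "poly2 c x y = 0" "poly2 c (x + r1) (y + r2) = 0" "poly2 c (x + l * r1) (y + l * r2) = 0"
    and "l \<noteq> 0" "l \<noteq> 1"
  shows "poly2_dx c x y * r1 + poly2_dy c x y * r2 = 0"
proof -
  have "(l * (l - 1)) * (poly2_dx c x y * r1 + poly2_dy c x y * r2) = 0"
    using assms(1-3) unfolding poly2_def poly2_dx_def poly2_dy_def by algebra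
  with assms(4,5) show ?thesis by simp
qed

lemma poly2_grad_at_three_zeros:
  assumes z: "poly2 c x1 y1 = 0" "poly2 c x2 y2 = 0" "poly2 c x3 y3 = 0"
  defines "r1 \<equiv> x2 - x1" and "r2 \<equiv> y2 - y1" and "s1 \<equiv> x3 - x1" and "s2 \<equiv> y3 - y1"
  shows "poly2_dx c x1 y1 * r1 + poly2_dy c x1 y1 * r2 = - quad_part2 c r1 r2"
    and "poly2_dx c x1 y1 * s1 + poly2_dy c x1 y1 * s2 = - quad_part2 c s1 s2"
    and "poly2_dx c x2 y2 * r1 + poly2_dy c x2 y2 * r2 = quad_part2 c r1 r2"
    and "poly2_dx c x2 y2 * s1 + poly2_dy c x2 y2 * s2 = polar2 c r1 r2 s1 s2 - quad_part2 c s1 s2"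
    and "poly2_dx c x3 y3 * r1 + poly2_dy c x3 y3 * r2 = polar2 c r1 r2 s1 s2 - quad_part2 c r1 r2"
    and "poly2_dx c x3 y3 * s1 + poly2_dy c x3 y3 * s2 = quad_part2 c s1 s2"
proof -
  have p2: "x2 = x1 + r1" "y2 = y1 + r2" and p3: "x3 = x1 + s1" "y3 = y1 + s2"
    by (simp_all add: r1_def r2_def s1_def s2_def)
  have r: "poly2_dx c x1 y1 * r1 + poly2_dy c x1 y1 * r2 = - quad_part2 c r1 r2"
    using z(1,2) poly2_translate[of c x1 r1 y1 r2] unfolding p2
    by (simp add: eq_neg_iff_add_eq_0 add.commute)
  have s: "poly2_dx c x1 y1 * s1 + poly2_dy c x1 y1 * s2 = - quad_part2 c s1 s2"
    using z(1,3) poly2_translate[of c x1 s1 y1 s2] unfolding p3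
    by (simp add: eq_neg_iff_add_eq_0 add.commute)
  show "poly2_dx c x1 y1 * r1 + poly2_dy c x1 y1 * r2 = - quad_part2 c r1 r2" by (fact r)
  show "poly2_dx c x1 y1 * s1 + poly2_dy c x1 y1 * s2 = - quad_part2 c s1 s2" by (fact s)
  show "poly2_dx c x2 y2 * r1 + poly2_dy c x2 y2 * r2 = quad_part2 c r1 r2"
    unfolding p2 poly2_grad_translate r polar2_self by simp
  show "poly2_dx c x2 y2 * s1 + poly2_dy c x2 y2 * s2 = polar2 c r1 r2 s1 s2 - quad_part2 c s1 s2"
    unfolding p2 poly2_grad_translate s by simp
  show "poly2_dx c x3 y3 * r1 + poly2_dy c x3 y3 * r2 = polar2 c r1 r2 s1 s2 - quad_part2 c r1 r2"
    unfolding p3 poly2_grad_translate r by (simp add: polar2_commute)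
  show "poly2_dx c x3 y3 * s1 + poly2_dy c x3 y3 * s2 = quad_part2 c s1 s2"
    unfolding p3 poly2_grad_translate s polar2_self by simp
qed

lemma common_zeros_not_collinear:
  assumes zP: "poly2 P x1 y1 = 0" "poly2 P x2 y2 = 0" "poly2 P x3 y3 = 0"
    and zQ: "poly2 Q x1 y1 = 0" "poly2 Q x2 y2 = 0" "poly2 Q x3 y3 = 0"
    and nondeg: "jac2 P Q x1 y1 \<noteq> 0"
    and distinct: "(x1, y1) \<noteq> (x2, y2)" "(x1, y1) \<noteq> (x3, y3)" "(x2, y2) \<noteq> (x3, y3)"
  shows "(x2 - x1) * (y3 - y1) - (y2 - y1) * (x3 - x1) \<noteq> 0"
proof
  define r1 r2 where "r1 = x2 - x1" and "r2 = y2 - y1"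
  assume "(x2 - x1) * (y3 - y1) - (y2 - y1) * (x3 - x1) = 0"
  then have collinear: "r1 * (y3 - y1) = r2 * (x3 - x1)" by (simp add: r1_def r2_def)
  have r0: "r1 \<noteq> 0 \<or> r2 \<noteq> 0" using distinct(1) by (auto simp: r1_def r2_def)
  obtain l where p3: "x3 = x1 + l * r1" "y3 = y1 + l * r2"
  proof (cases "r1 = 0")
    case True
    with r0 collinear have "x3 = x1" "r2 \<noteq> 0" by simp_all
    with True show ?thesis by (intro that[of "(y3 - y1) / r2"]) simp_all
  next
    case False
    with collinear show ?thesis by (intro that[of "(x3 - x1) / r1"]) (simp_all add: field_simps)
  qed
  have p2: "x2 = x1 + r1" "y2 = y1 + r2" by (simp_all add: r1_def r2_def)
  have "l \<noteq> 0" using distinct(2) p3 by auto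
  moreover have "l \<noteq> 1" using distinct(3) p2 p3 by auto
  ultimately have "poly2_dx P x1 y1 * r1 + poly2_dy P x1 y1 * r2 = 0"
    and "poly2_dx Q x1 y1 * r1 + poly2_dy Q x1 y1 * r2 = 0"
    using zP zQ unfolding p2 p3 by (simp_all add: poly2_grad_orth_of_collinear_zeros)
  then have "jac2 P Q x1 y1 * r1 = 0" "jac2 P Q x1 y1 * r2 = 0"
    unfolding jac2_def by algebra+
  with r0 nondeg show False by simp
qed

lemma cross_image_eq_det_cross:
  fixes a b c d r1 r2 s1 s2 :: "'a::comm_ring"
  shows "(a * r1 + c * r2) * (b * s1 + d * s2) - (b * r1 + d * r2) * (a * s1 + c * s2)
    = (a * d - c * b) * (r1 * s2 - r2 * s1)"
  by (simp add: algebra_simps)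

lemma cross_image_eq_trace_cross:
  fixes a b c d r1 r2 s1 s2 :: "'a::comm_ring"
  shows "(a * r1 + c * r2) * s2 - (b * r1 + d * r2) * s1 + (r1 * (b * s1 + d * s2) - r2 * (a * s1 + c * s2))
    = (a + d) * (r1 * s2 - r2 * s1)"
  by (simp add: algebra_simps)

text \<open>The Jacobians \<open>M\<^sub>i\<close> at the three points satisfy \<open>M\<^sub>1 r = -a, M\<^sub>1 s = -c,
  M\<^sub>2 r = a, M\<^sub>2 s = b - c, M\<^sub>3 r = b - a, M\<^sub>3 s = c\<close> with \<open>a = K(r)\<close>, \<open>c = K(s)\<close>,
  \<open>b = B(r, s)\<close> for the quadratic part \<open>K\<close> and its polarisation \<open>B\<close>.
  Multiplied by \<open>D = det [r s]\<close>, their determinants \<open>e\<^sub>i\<close> and (vanishing) traces become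
  \<open>2 \<times> 2\<close> determinants of these vectors; the identity then holds in the ideal they generate.\<close>
lemma jacobian_square_difference_identity:
  fixes aP aQ bP bQ cP cQ r1 r2 s1 s2 e1 e2 e3 D :: complex
  assumes "D = r1 * s2 - r2 * s1"
    and "(- aP) * (- cQ) - (- aQ) * (- cP) = e1 * D"
    and "aP * (bQ - cQ) - aQ * (bP - cP) = e2 * D"
    and "(bP - aP) * cQ - (bQ - aQ) * cP = e3 * D"
    and "(- aP) * s2 - (- aQ) * s1 + (r1 * (- cQ) - r2 * (- cP)) = 0"
    and "aP * s2 - aQ * s1 + (r1 * (bQ - cQ) - r2 * (bP - cP)) = 0"
    and "(bP - aP) * s2 - (bQ - aQ) * s1 + (r1 * cQ - r2 * cP) = 0"
  shows "D^4 * (e3^2 - e1^2)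
    = 2 * (cP * s2 - cQ * s1) * ((aP * s2 - aQ * s1) - (cP * s2 - cQ * s1)) * D^2 * (e1 + e2)"
  using assms by algebra

lemma jac2_square_eq_of_opposite:
  assumes trace: "\<And>x y. poly2_dx P x y + poly2_dy Q x y = 0"
    and zP: "poly2 P x1 y1 = 0" "poly2 P x2 y2 = 0" "poly2 P x3 y3 = 0"
    and zQ: "poly2 Q x1 y1 = 0" "poly2 Q x2 y2 = 0" "poly2 Q x3 y3 = 0"
    and nondeg: "jac2 P Q x1 y1 \<noteq> 0"
    and distinct: "(x1, y1) \<noteq> (x2, y2)" "(x1, y1) \<noteq> (x3, y3)" "(x2, y2) \<noteq> (x3, y3)"
    and opposite: "jac2 P Q x1 y1 + jac2 P Q x2 y2 = 0"
  shows "(jac2 P Q x3 y3)^2 = (jac2 P Q x1 y1)^2"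
proof -
  define r1 r2 s1 s2 where "r1 = x2 - x1" and "r2 = y2 - y1" and "s1 = x3 - x1" and "s2 = y3 - y1"
  define D where "D = r1 * s2 - r2 * s1"
  have "D \<noteq> 0"
    using common_zeros_not_collinear[OF zP zQ nondeg distinct]
    by (simp add: D_def r1_def r2_def s1_def s2_def)
  note grads = poly2_grad_at_three_zeros[OF zP, folded r1_def r2_def s1_def s2_def]
    poly2_grad_at_three_zeros[OF zQ, folded r1_def r2_def s1_def s2_def]
  have det: "(poly2_dx P x y * r1 + poly2_dy P x y * r2) * (poly2_dx Q x y * s1 + poly2_dy Q x y * s2)
      - (poly2_dx Q x y * r1 + poly2_dy Q x y * r2) * (poly2_dx P x y * s1 + poly2_dy P x y * s2)
      = jac2 P Q x y * D" for x y
    unfolding cross_image_eq_det_cross jac2_def D_def ..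
  have tr: "(poly2_dx P x y * r1 + poly2_dy P x y * r2) * s2 - (poly2_dx Q x y * r1 + poly2_dy Q x y * r2) * s1
      + (r1 * (poly2_dx Q x y * s1 + poly2_dy Q x y * s2) - r2 * (poly2_dx P x y * s1 + poly2_dy P x y * s2))
      = 0" for x y
    unfolding cross_image_eq_trace_cross trace by simp
  have "D^4 * ((jac2 P Q x3 y3)^2 - (jac2 P Q x1 y1)^2) = 2 * (quad_part2 P s1 s2 * s2 - quad_part2 Q s1 s2 * s1)
      * ((quad_part2 P r1 r2 * s2 - quad_part2 Q r1 r2 * s1) - (quad_part2 P s1 s2 * s2 - quad_part2 Q s1 s2 * s1))
      * D^2 * (jac2 P Q x1 y1 + jac2 P Q x2 y2)"
    by (rule jacobian_square_difference_identity[OF D_def det[of x1 y1, unfolded grads]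
          det[of x2 y2, unfolded grads] det[of x3 y3, unfolded grads] tr[of x1 y1, unfolded grads]
          tr[of x2 y2, unfolded grads] tr[of x3 y3, unfolded grads]])
  with opposite \<open>D \<noteq> 0\<close> show ?thesis by simp
qed

lemma det_Dv_square_eq_of_opposite:
  assumes ham: "quad_hamiltonian P Q"
    and sing: "singular_pt P Q p1" "singular_pt P Q p2" "singular_pt P Q p3"
    and nondeg: "det_Dv P Q p1 \<noteq> 0"
    and distinct: "p1 \<noteq> p2" "p1 \<noteq> p3" "p2 \<noteq> p3"
    and opposite: "det_Dv P Q p1 + det_Dv P Q p2 = 0"
  shows "(det_Dv P Q p3)^2 = (det_Dv P Q p1)^2"
proof -
  have deg: "deg_le2 P" "deg_le2 Q" using ham by (simp_all add: quad_hamiltonian_def)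
  obtain x1 y1 x2 y2 x3 y3 where p: "p1 = (x1, y1)" "p2 = (x2, y2)" "p3 = (x3, y3)"
    by (metis surj_pair)
  show ?thesis
    using sing nondeg distinct opposite
    unfolding p det_Dv_eq_jac2[OF deg] singular_pt_iff_poly2[OF deg]
    by (intro jac2_square_eq_of_opposite[OF quad_hamiltonian_trace_zero[OF ham]]) auto
qed

section \<open>Necessity\<close>

definition four_singular_dets :: "coeffs2 \<Rightarrow> coeffs2 \<Rightarrow> complex multiset \<Rightarrow> bool" where
  "four_singular_dets P Q M \<longleftrightarrow> (\<exists>p :: nat \<Rightarrow> complex \<times> complex.
     inj_on p {..<4} \<and> (\<forall>k<4. singular_pt P Q (p k) \<and> det_Dv P Q (p k) \<noteq> 0) \<and>
     image_mset (\<lambda>k. det_Dv P Q (p k)) (mset [0..<4]) = M)"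

lemma four_singular_dets_opposite_pairs_coincide:
  assumes ham: "quad_hamiltonian P Q"
    and dets: "four_singular_dets P Q {#x, -x, y, -y#}"
    and "x \<noteq> 0"
  shows "y = x \<or> y = -x"
proof (rule ccontr)
  assume y: "\<not> (y = x \<or> y = -x)"
  obtain p :: "nat \<Rightarrow> complex \<times> complex" where inj: "inj_on p {..<4}"
    and sing: "\<And>k. k < 4 \<Longrightarrow> singular_pt P Q (p k) \<and> det_Dv P Q (p k) \<noteq> 0"
    and M: "image_mset (\<lambda>k. det_Dv P Q (p k)) (mset [0..<4]) = {#x, -x, y, -y#}"
    using dets unfolding four_singular_dets_def by blast
  have "x \<in># image_mset (\<lambda>k. det_Dv P Q (p k)) (mset [0..<4])"
    and "-x \<in># image_mset (\<lambda>k. det_Dv P Q (p k)) (mset [0..<4])"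
    and "y \<in># image_mset (\<lambda>k. det_Dv P Q (p k)) (mset [0..<4])"
    unfolding M by simp_all
  then obtain a b c where abc: "a < 4" "b < 4" "c < 4"
    and vals: "det_Dv P Q (p a) = x" "det_Dv P Q (p b) = -x" "det_Dv P Q (p c) = y"
    by auto
  have "x \<noteq> -x" using \<open>x \<noteq> 0\<close> by simp
  with y vals have "a \<noteq> b" "a \<noteq> c" "b \<noteq> c" by auto
  with inj abc have "p a \<noteq> p b" "p a \<noteq> p c" "p b \<noteq> p c" by (auto dest: inj_onD)
  with ham sing abc vals \<open>x \<noteq> 0\<close> have "y^2 = x^2"
    using det_Dv_square_eq_of_opposite[of P Q "p a" "p b" "p c"] by auto
  with y show False by (simp add: power2_eq_iff)
qed

lemma opposite_pair_imp_two_opposite_pairs: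
  fixes d1 d2 d3 d4 :: "'a::field"
  assumes nonzero: "d1 \<noteq> 0" "d2 \<noteq> 0" "d3 \<noteq> 0" "d4 \<noteq> 0"
    and recip: "1 / d1 + 1 / d2 + 1 / d3 + 1 / d4 = 0"
    and "\<not> (d1 + d2 \<noteq> 0 \<and> d1 + d3 \<noteq> 0 \<and> d1 + d4 \<noteq> 0 \<and>
           d2 + d3 \<noteq> 0 \<and> d2 + d4 \<noteq> 0 \<and> d3 + d4 \<noteq> 0)"
  obtains x y where "{#d1, d2, d3, d4#} = {#x, -x, y, -y#}"
proof -
  have neg: "\<And>u v :: 'a. u + v = 0 \<Longrightarrow> v = - u" by (simp add: eq_neg_iff_add_eq_0 add.commute)
  \<comment> \<open>\<open>d\<^sub>1d\<^sub>2d\<^sub>3d\<^sub>4 \<Sum> 1/d\<^sub>k\<close> splits along each pairing of the indices\<close>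
  have e3: "d2 * d3 * d4 + d1 * d3 * d4 + d1 * d2 * d4 + d1 * d2 * d3 = 0"
    using recip nonzero by (simp add: field_simps)
  have "d3 * d4 * (d1 + d2) + d1 * d2 * (d3 + d4) = 0"
    and "d2 * d4 * (d1 + d3) + d1 * d3 * (d2 + d4) = 0"
    and "d2 * d3 * (d1 + d4) + d1 * d4 * (d2 + d3) = 0"
    using e3 by algebra+
  with nonzero assms(6)
  consider "d1 + d2 = 0" "d3 + d4 = 0" | "d1 + d3 = 0" "d2 + d4 = 0" | "d1 + d4 = 0" "d2 + d3 = 0"
    by auto
  then show ?thesis
  proof cases
    case 1
    then show ?thesis using neg that[of d1 d3] by simp
  next
    case 2
    then show ?thesis using neg that[of d1 d2] by (simp add: add_mset_commute)
  next
    case 3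
    then show ?thesis using neg that[of d1 d2] by (simp add: add_mset_commute)
  qed
qed

lemma four_singular_dets_imp_condition:
  assumes ham: "quad_hamiltonian P Q"
    and dets: "four_singular_dets P Q {#d1, d2, d3, d4#}"
    and nonzero: "d1 \<noteq> 0" "d2 \<noteq> 0" "d3 \<noteq> 0" "d4 \<noteq> 0"
    and recip: "1 / d1 + 1 / d2 + 1 / d3 + 1 / d4 = 0"
  shows "(d1 + d2 \<noteq> 0 \<and> d1 + d3 \<noteq> 0 \<and> d1 + d4 \<noteq> 0 \<and>
           d2 + d3 \<noteq> 0 \<and> d2 + d4 \<noteq> 0 \<and> d3 + d4 \<noteq> 0)
         \<or> (\<exists>d. d \<noteq> 0 \<and> {#d1, d2, d3, d4#} = {#d, -d, d, -d#})"
proof (cases "d1 + d2 \<noteq> 0 \<and> d1 + d3 \<noteq> 0 \<and> d1 + d4 \<noteq> 0 \<and>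
           d2 + d3 \<noteq> 0 \<and> d2 + d4 \<noteq> 0 \<and> d3 + d4 \<noteq> 0")
  case False
  then obtain x y where M: "{#d1, d2, d3, d4#} = {#x, -x, y, -y#}"
    using opposite_pair_imp_two_opposite_pairs[OF nonzero recip] by blast
  have "x \<in># {#d1, d2, d3, d4#}" unfolding M by simp
  with nonzero have "x \<noteq> 0" by auto
  moreover have "y = x \<or> y = -x"
    using four_singular_dets_opposite_pairs_coincide[OF ham dets[unfolded M] \<open>x \<noteq> 0\<close>] .
  ultimately have "{#d1, d2, d3, d4#} = {#x, -x, x, -x#}"
    unfolding M by (auto simp: add_mset_commute)
  with \<open>x \<noteq> 0\<close> show ?thesis by blast
qed simp

section \<open>Realisations\<close>

definition quad_coeffs :: "complex \<Rightarrow> complex \<Rightarrow> complex \<Rightarrow> complex \<Rightarrow> complex \<Rightarrow> complex \<Rightarrow> coeffs2" where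
  "quad_coeffs c00 c10 c01 c20 c11 c02 = (\<lambda>i j.
     if (i, j) = (0, 0) then c00 else if (i, j) = (1, 0) then c10 else if (i, j) = (0, 1) then c01
     else if (i, j) = (2, 0) then c20 else if (i, j) = (1, 1) then c11 else if (i, j) = (0, 2) then c02
     else 0)"

lemma deg_le2_quad_coeffs: "deg_le2 (quad_coeffs c00 c10 c01 c20 c11 c02)"
  unfolding deg_le2_def quad_coeffs_def by auto

lemma poly2_quad_coeffs:
    "poly2 (quad_coeffs c00 c10 c01 c20 c11 c02) x y
       = c00 + c10 * x + c01 * y + c20 * x^2 + c11 * x * y + c02 * y^2"
  and poly2_dx_quad_coeffs: "poly2_dx (quad_coeffs c00 c10 c01 c20 c11 c02) x y = c10 + 2 * c20 * x + c11 * y"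
  and poly2_dy_quad_coeffs: "poly2_dy (quad_coeffs c00 c10 c01 c20 c11 c02) x y = c01 + c11 * x + 2 * c02 * y"
  by (simp_all add: poly2_def poly2_dx_def poly2_dy_def quad_coeffs_def)

lemma quad_hamiltonian_quad_coeffs:
  assumes "c10 + d01 = 0" "2 * c20 + d11 = 0" "c11 + 2 * d02 = 0"
  shows "quad_hamiltonian (quad_coeffs c00 c10 c01 c20 c11 c02) (quad_coeffs d00 d10 d01 d20 d11 d02)"
  unfolding quad_hamiltonian_def
proof (intro conjI deg_le2_quad_coeffs allI)
  fix i j :: nat
  show "pdx (quad_coeffs c00 c10 c01 c20 c11 c02) i j + pdy (quad_coeffs d00 d10 d01 d20 d11 d02) i j = 0"
    using assms unfolding pdx_def pdy_def quad_coeffs_def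
    by (cases i; cases j) (auto simp: algebra_simps split: nat.splits)
qed

lemma four_singular_dets_intro:
  assumes "distinct [q0, q1, q2, q3]"
    and "singular_pt P Q q0" "singular_pt P Q q1" "singular_pt P Q q2" "singular_pt P Q q3"
    and "det_Dv P Q q0 \<noteq> 0" "det_Dv P Q q1 \<noteq> 0" "det_Dv P Q q2 \<noteq> 0" "det_Dv P Q q3 \<noteq> 0"
  shows "four_singular_dets P Q {#det_Dv P Q q0, det_Dv P Q q1, det_Dv P Q q2, det_Dv P Q q3#}"
  unfolding four_singular_dets_def
proof (intro exI[of _ "\<lambda>k. [q0, q1, q2, q3] ! k"] conjI allI impI)
  have "{..<4::nat} = {0, 1, 2, 3}" by auto
  with assms(1) show "inj_on (\<lambda>k. [q0, q1, q2, q3] ! k) {..<4}" by (auto simp: inj_on_def)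
  fix k :: nat
  assume "k < 4"
  then have "k = 0 \<or> k = 1 \<or> k = 2 \<or> k = 3" by auto
  with assms show "singular_pt P Q ([q0, q1, q2, q3] ! k)" "det_Dv P Q ([q0, q1, q2, q3] ! k) \<noteq> 0"
    by auto
next
  have "[0..<4] = [0, 1, 2, 3::nat]" by (simp add: upt_rec)
  then show "image_mset (\<lambda>k. det_Dv P Q ([q0, q1, q2, q3] ! k)) (mset [0..<4])
      = {#det_Dv P Q q0, det_Dv P Q q1, det_Dv P Q q2, det_Dv P Q q3#}"
    by simp
qed

lemma exists_four_singular_dets_opposite_pairs:
  assumes "d \<noteq> 0"
  shows "\<exists>P Q. quad_hamiltonian P Q \<and> four_singular_dets P Q {#d, -d, d, -d#}"
proof -
  define P where "P = quad_coeffs 0 0 (-1) 0 0 1"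
  define Q where "Q = quad_coeffs 0 d 0 (-d) 0 0"
  have ham: "quad_hamiltonian P Q" unfolding P_def Q_def by (rule quad_hamiltonian_quad_coeffs) simp_all
  have deg: "deg_le2 P" "deg_le2 Q" unfolding P_def Q_def by (simp_all add: deg_le2_quad_coeffs)
  have dets: "det_Dv P Q (x, y) = d * (2 * x - 1) * (2 * y - 1)" for x y
    unfolding det_Dv_eq_jac2[OF deg] jac2_def
    by (simp add: P_def Q_def poly2_dx_quad_coeffs poly2_dy_quad_coeffs algebra_simps)
  have "four_singular_dets P Q {#det_Dv P Q (0, 0), det_Dv P Q (1, 0), det_Dv P Q (0, 1), det_Dv P Q (1, 1)#}"
    by (rule four_singular_dets_intro)
      (use assms in \<open>simp_all add: dets singular_pt_iff_poly2[OF deg], simp_all add: P_def Q_def poly2_quad_coeffs\<close>)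
  then have "four_singular_dets P Q {#d, -d, d, -d#}" by (simp add: dets add_mset_commute)
  with ham show ?thesis by blast
qed

text \<open>The general quadratic Hamiltonian field vanishing at \<open>(0,0)\<close>, \<open>(1,0)\<close> and \<open>(0,1)\<close> is
  \<open>P = m(x\<^sup>2 - x) + 2mxy + W(y\<^sup>2 - y)\<close>, \<open>Q = U(x - x\<^sup>2) - 2mxy + m(y - y\<^sup>2)\<close>;
  the conditions on \<open>U\<close> and \<open>W\<close> make \<open>(a, b)\<close> a fourth singular point.\<close>
lemma simplex_field_singularities:
  fixes a b m U W E :: complex
  assumes a: "a \<noteq> 0" "a \<noteq> 1" and b: "b \<noteq> 0" "b \<noteq> 1"
    and U: "U * (a * (a - 1)) = - m * b * (2 * a + b - 1)"
    and W: "W * (b * (b - 1)) = - m * a * (a + 2 * b - 1)"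
    and E: "E * ((a - 1) * (b - 1)) = 2 * m^2 * (a + b) * (a + b - 1)^2"
  defines "P \<equiv> quad_coeffs 0 (-m) (-W) m (2 * m) W" and "Q \<equiv> quad_coeffs 0 U m (-U) (-2 * m) (-m)"
  shows "quad_hamiltonian P Q"
    and "singular_pt P Q (0, 0)" "singular_pt P Q (1, 0)" "singular_pt P Q (0, 1)" "singular_pt P Q (a, b)"
    and "det_Dv P Q (0, 0) * (a + b - 1) = E" "det_Dv P Q (1, 0) * a = - E"
    and "det_Dv P Q (0, 1) * b = - E" "det_Dv P Q (a, b) = E"
proof -
  have deg: "deg_le2 P" "deg_le2 Q" unfolding P_def Q_def by (simp_all add: deg_le2_quad_coeffs)
  have sing: "singular_pt P Q (x, y) \<longleftrightarrow>
      - m * x - W * y + m * x^2 + 2 * m * x * y + W * y^2 = 0 \<and>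
      U * x + m * y - U * x^2 - 2 * m * x * y - m * y^2 = 0" for x y
    unfolding singular_pt_iff_poly2[OF deg] by (simp add: P_def Q_def poly2_quad_coeffs)
  have jac: "det_Dv P Q (x, y) = (- m + 2 * m * x + 2 * m * y) * (m - 2 * m * x - 2 * m * y)
      - (- W + 2 * m * x + 2 * W * y) * (U - 2 * U * x - 2 * m * y)" for x y
    unfolding det_Dv_eq_jac2[OF deg] jac2_def
    by (simp add: P_def Q_def poly2_dx_quad_coeffs poly2_dy_quad_coeffs algebra_simps)
  have nz: "a * (a - 1) * (b * (b - 1)) \<noteq> 0" using a b by simp
  show "quad_hamiltonian P Q" unfolding P_def Q_def by (rule quad_hamiltonian_quad_coeffs) simp_all
  show "singular_pt P Q (0, 0)" "singular_pt P Q (1, 0)" "singular_pt P Q (0, 1)"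
    by (simp_all add: sing)
  show "singular_pt P Q (a, b)" unfolding sing using U W by algebra
  have "(det_Dv P Q (0, 0) * (a + b - 1) - E) * (a * (a - 1) * (b * (b - 1))) = 0"
    unfolding jac using U W E by algebra
  with nz show "det_Dv P Q (0, 0) * (a + b - 1) = E" by simp
  have "(det_Dv P Q (1, 0) * a + E) * (a * (a - 1) * (b * (b - 1))) = 0"
    unfolding jac using U W E by algebra
  with nz show "det_Dv P Q (1, 0) * a = - E" by (simp add: eq_neg_iff_add_eq_0)
  have "(det_Dv P Q (0, 1) * b + E) * (a * (a - 1) * (b * (b - 1))) = 0"
    unfolding jac using U W E by algebra
  with nz show "det_Dv P Q (0, 1) * b = - E" by (simp add: eq_neg_iff_add_eq_0)
  have "(det_Dv P Q (a, b) - E) * (a * (a - 1) * (b * (b - 1))) = 0"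
    unfolding jac using U W E by algebra
  with nz show "det_Dv P Q (a, b) = E" by simp
qed

text \<open>The fourth point \<open>(a, b)\<close> is dictated by the determinants at the first three:
  \<open>det (1,0) / det (a,b) = -1/a\<close> and \<open>det (0,1) / det (a,b) = -1/b\<close>, and then the relation
  \<open>\<Sum> 1/d\<^sub>k = 0\<close> is exactly what makes \<open>det (0,0) = d\<^sub>1\<close>; the scale \<open>m\<close> fixes \<open>det (a,b) = d\<^sub>4\<close>.\<close>
lemma exists_four_singular_dets_generic:
  fixes d1 d2 d3 d4 :: complex
  assumes nonzero: "d1 \<noteq> 0" "d2 \<noteq> 0" "d3 \<noteq> 0" "d4 \<noteq> 0"
    and recip: "1 / d1 + 1 / d2 + 1 / d3 + 1 / d4 = 0"
    and pairs: "d2 + d3 \<noteq> 0" "d2 + d4 \<noteq> 0" "d3 + d4 \<noteq> 0"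
  shows "\<exists>P Q. quad_hamiltonian P Q \<and> four_singular_dets P Q {#d1, d2, d3, d4#}"
proof -
  define a b where "a = - d4 / d2" and "b = - d4 / d3"
  have a: "a \<noteq> 0" "a \<noteq> 1" and b: "b \<noteq> 0" "b \<noteq> 1"
    using nonzero pairs(2,3) by (auto simp: a_def b_def field_simps add_eq_0_iff)
  have "(a + b) * (d2 * d3) = - d4 * (d2 + d3)"
    using nonzero by (simp add: a_def b_def field_simps)
  with nonzero pairs(1) have "a + b \<noteq> 0" by auto
  have "a + b - 1 = d4 / d1 - d4 * (1 / d1 + 1 / d2 + 1 / d3 + 1 / d4)"
    using nonzero by (simp add: a_def b_def field_simps)
  then have ab1: "a + b - 1 = d4 / d1" using recip by simp
  define m where "m = csqrt (d4 * (a - 1) * (b - 1) / (2 * (a + b) * (a + b - 1)^2))"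
  have "2 * (a + b) * (a + b - 1)^2 \<noteq> 0"
    using \<open>a + b \<noteq> 0\<close> ab1 nonzero by (simp del: distrib_left_numeral)
  then have E: "d4 * ((a - 1) * (b - 1)) = 2 * m^2 * (a + b) * (a + b - 1)^2"
    unfolding m_def power2_csqrt by (simp add: field_simps)
  define U W where "U = - m * b * (2 * a + b - 1) / (a * (a - 1))"
    and "W = - m * a * (a + 2 * b - 1) / (b * (b - 1))"
  have U: "U * (a * (a - 1)) = - m * b * (2 * a + b - 1)" using a by (simp add: U_def)
  have W: "W * (b * (b - 1)) = - m * a * (a + 2 * b - 1)" using b by (simp add: W_def)
  note field = simplex_field_singularities[OF a b U W E]
  define P Q where "P = quad_coeffs 0 (-m) (-W) m (2 * m) W"
    and "Q = quad_coeffs 0 U m (-U) (-2 * m) (-m)"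
  have "det_Dv P Q (0, 0) = d1"
    using field(6) nonzero unfolding P_def Q_def ab1 by (simp add: field_simps)
  moreover have "det_Dv P Q (1, 0) = d2"
    using field(7) nonzero unfolding P_def Q_def a_def by (simp add: field_simps)
  moreover have "det_Dv P Q (0, 1) = d3"
    using field(8) nonzero unfolding P_def Q_def b_def by (simp add: field_simps)
  moreover have "det_Dv P Q (a, b) = d4"
    using field(9) unfolding P_def Q_def .
  ultimately have dets: "det_Dv P Q (0, 0) = d1" "det_Dv P Q (1, 0) = d2" "det_Dv P Q (0, 1) = d3"
      "det_Dv P Q (a, b) = d4"
    by simp_all
  have "four_singular_dets P Q {#det_Dv P Q (0, 0), det_Dv P Q (1, 0), det_Dv P Q (0, 1), det_Dv P Q (a, b)#}"
    by (rule four_singular_dets_intro) (use field(2-5) a(1) b(1) nonzero dets in \<open>auto simp: P_def Q_def\<close>)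
  moreover have "quad_hamiltonian P Q" using field(1) unfolding P_def Q_def .
  ultimately show ?thesis unfolding dets by blast
qed

theorem theorem5p4:
  fixes d1 d2 d3 d4 :: complex
  assumes "d1 \<noteq> 0" "d2 \<noteq> 0" "d3 \<noteq> 0" "d4 \<noteq> 0"
    and "1 / d1 + 1 / d2 + 1 / d3 + 1 / d4 = 0"
  shows "(\<exists>P Q. quad_hamiltonian P Q \<and>
            (\<exists>p :: nat \<Rightarrow> complex \<times> complex.
               inj_on p {..<4} \<and>
               (\<forall>k<4. singular_pt P Q (p k) \<and> det_Dv P Q (p k) \<noteq> 0) \<and>
               image_mset (\<lambda>k. det_Dv P Q (p k)) (mset [0..<4]) = {#d1, d2, d3, d4#}))
         \<longleftrightarrow>
         ((d1 + d2 \<noteq> 0 \<and> d1 + d3 \<noteq> 0 \<and> d1 + d4 \<noteq> 0 \<and>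
           d2 + d3 \<noteq> 0 \<and> d2 + d4 \<noteq> 0 \<and> d3 + d4 \<noteq> 0)
          \<or> (\<exists>d. d \<noteq> 0 \<and> {#d1, d2, d3, d4#} = {#d, -d, d, -d#}))"
  unfolding four_singular_dets_def[symmetric]
proof (rule iffI, goal_cases)
  case 1
  then obtain P Q where "quad_hamiltonian P Q" "four_singular_dets P Q {#d1, d2, d3, d4#}"
    by blast
  then show ?case by (rule four_singular_dets_imp_condition[OF _ _ assms])
next
  case 2
  then show ?case
    using exists_four_singular_dets_generic[OF assms] exists_four_singular_dets_opposite_pairs
    by auto
qed

end
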